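(* Let $\nu\ge1$, $d:\mathbb{Z}^\nu\to\mathbb{C}$ bounded, $J=J_0+D$ on $\ell^2(\mathbb{Z}^\nu)$. (i) If $a\in\mathbb{R}$ is not an eigenvalue of $J_0+\Re(D)$, then $J$ has no boundary eigenvalue with real part $a$. (ii) Let $b\in\mathbb{R}$. If $\Im(d(k))\neq b$ for all $k\in\mathbb{Z}^\nu$, then $J$ has no boundary eigenvalue with imaginary part $b$.
   Context: $J_0$ is the discrete Laplacian on $\ell^2(\mathbb{Z}^\nu)$: $(J_0u)(k)=\sum_{l\in\mathbb{Z}^\nu:\|l\|_1=1}u(k+l)$, where $\|l\|_1=\sum_{j=1}^\nu|l_j|$. For a bounded $d:\mathbb{Z}^\nu\to\mathbb{C}$, $D$ is multiplication by $d$, and $\Re(D)$, $\Im(D)$ are multiplication by $\Re(d(k))$, $\Im(d(k))$. The numerical range is $\operatorname{Num}(J)=\{\langle Ju,u\rangle:\|u\|=1\}$, and a boundary eigenvalue of $J$ is an eigenvalue of $J$ lying in the topological boundary of $\operatorname{Num}(J)$. *)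

theory Defs
  imports "HOL-Analysis.Analysis"
begin

text \<open>Lattice sites of Z^nu are modelled as int ^ 'n for a finite index type 'n
  (so nu = CARD('n) \<ge> 1). Elements of l^2 are square-summable functions.\<close>

definition l2 :: "('k \<Rightarrow> complex) set" where
  "l2 = {u. (\<lambda>k. (norm (u k))\<^sup>2) summable_on UNIV}"

definition l2_inner :: "('k \<Rightarrow> complex) \<Rightarrow> ('k \<Rightarrow> complex) \<Rightarrow> complex" where
  "l2_inner u v = infsum (\<lambda>k. u k * cnj (v k)) UNIV"

definition l2_norm :: "('k \<Rightarrow> complex) \<Rightarrow> real" where
  "l2_norm u = sqrt (infsum (\<lambda>k. (norm (u k))\<^sup>2) UNIV)"

definition lap :: "(int ^ 'n \<Rightarrow> complex) \<Rightarrow> int ^ 'n \<Rightarrow> complex" where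
  "lap u k = (\<Sum>l\<in>{l :: int ^ 'n. (\<Sum>i\<in>UNIV. \<bar>l $ i\<bar>) = 1}. u (k + l))"

definition jacobi :: "(int ^ 'n \<Rightarrow> complex) \<Rightarrow> (int ^ 'n \<Rightarrow> complex) \<Rightarrow> int ^ 'n \<Rightarrow> complex" where
  "jacobi d u = (\<lambda>k. lap u k + d k * u k)"

definition is_eigenvalue :: "(('k \<Rightarrow> complex) \<Rightarrow> ('k \<Rightarrow> complex)) \<Rightarrow> complex \<Rightarrow> bool" where
  "is_eigenvalue A z \<longleftrightarrow> (\<exists>u\<in>l2. u \<noteq> (\<lambda>_. 0) \<and> A u = (\<lambda>k. z * u k))"

definition numerical_range :: "(('k \<Rightarrow> complex) \<Rightarrow> ('k \<Rightarrow> complex)) \<Rightarrow> complex set" where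
  "numerical_range A = {l2_inner (A u) u | u. u \<in> l2 \<and> l2_norm u = 1}"

definition boundary_eigenvalue :: "(('k \<Rightarrow> complex) \<Rightarrow> ('k \<Rightarrow> complex)) \<Rightarrow> complex \<Rightarrow> bool" where
  "boundary_eigenvalue A z \<longleftrightarrow> is_eigenvalue A z \<and> z \<in> frontier (numerical_range A)"

end

theory Submission
  imports Defs
begin

text \<open>
  Boundary eigenvalues of J = J0 + D are normal eigenvalues.

  Idea: let z be an eigenvalue of J lying on the frontier of its numerical range, with unit
  eigenvector u.  If w is orthogonal to u and c = <J w, u> were nonzero, then the numerical range
  of the compression of J to span{u, w}, whose matrix is upper triangular with diagonal (z, e)
  and corner entry c, would contain a whole disc around z, so z would be an interior point of
  the numerical range.  Hence <J w, u> = 0 for every such w.  Taking w = delta m - conj(u m) u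
  and using that the Laplacian is symmetric, this says that u is also an eigenvector of the
  formal adjoint J0 + conj(D) with eigenvalue conj z.  Adding, resp. subtracting, the two
  eigenvalue equations gives (J0 + Re D) u = Re z u and (Im d(k) - Im z) u(k) = 0 for all k,
  which are parts (i) and (ii).
\<close>

lemma l2_summable: "u \<in> l2 \<Longrightarrow> (\<lambda>k. (norm (u k))\<^sup>2) summable_on UNIV"
  by (simp add: l2_def)

lemma l2_zero: "(\<lambda>_. 0) \<in> l2"
  by (simp add: l2_def)

lemma l2_add:
  assumes "u \<in> l2" "v \<in> l2"
  shows "(\<lambda>k. u k + v k) \<in> l2"
proof -
  have bound: "(norm (u k + v k))\<^sup>2 \<le> 2 * (norm (u k))\<^sup>2 + 2 * (norm (v k))\<^sup>2" for k
  proof -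
    have "(norm (u k + v k))\<^sup>2 \<le> (norm (u k) + norm (v k))\<^sup>2"
      by (simp add: power_mono norm_triangle_ineq)
    also have "\<dots> \<le> 2 * (norm (u k))\<^sup>2 + 2 * (norm (v k))\<^sup>2"
      using power2_sum[of "norm (u k)" "norm (v k)"] sum_squares_bound[of "norm (u k)" "norm (v k)"]
      by linarith
    finally show ?thesis .
  qed
  have "(\<lambda>k. 2 * (norm (u k))\<^sup>2 + 2 * (norm (v k))\<^sup>2) summable_on UNIV"
    using assms by (intro summable_on_add summable_on_cmult_right l2_summable)
  then show ?thesis
    unfolding l2_def mem_Collect_eq by (rule summable_on_comparison_test) (use bound in auto)
qed

lemma l2_scale:
  assumes "u \<in> l2"
  shows "(\<lambda>k. c * u k) \<in> l2"
proof -
  have "(\<lambda>k. (norm c)\<^sup>2 * (norm (u k))\<^sup>2) summable_on UNIV"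
    using assms by (intro summable_on_cmult_right l2_summable)
  then show ?thesis by (simp add: l2_def norm_mult power_mult_distrib)
qed

lemma l2_lincomb: "u \<in> l2 \<Longrightarrow> v \<in> l2 \<Longrightarrow> (\<lambda>k. p * u k + q * v k) \<in> l2"
  by (intro l2_add l2_scale)

(* Finite sums stay in l2; an infinite index set gives the zero sum by convention. *)
lemma l2_sum:
  assumes "\<And>l. l \<in> L \<Longrightarrow> f l \<in> l2"
  shows "(\<lambda>k. \<Sum>l\<in>L. f l k) \<in> l2"
proof (cases "finite L")
  case True
  then show ?thesis using assms
    by (induction L rule: finite_induct) (simp_all add: l2_zero l2_add)
qed (simp add: l2_zero)

definition delta :: "'k \<Rightarrow> 'k \<Rightarrow> complex" where
  "delta m = (\<lambda>j. if j = m then 1 else 0)"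

lemma l2_delta: "delta m \<in> l2"
proof -
  have "(\<lambda>j. (norm (delta m j))\<^sup>2) summable_on {m}" by simp
  then show ?thesis
    unfolding l2_def mem_Collect_eq
    by (subst summable_on_cong_neutral[where T = "{m}"]) (auto simp: delta_def)
qed

lemma l2_eq_zero:
  assumes "u \<in> l2" "infsum (\<lambda>k. (norm (u k))\<^sup>2) UNIV = 0"
  shows "u = (\<lambda>_. 0)"
proof
  fix k
  have "(norm (u k))\<^sup>2 = 0"
    by (rule nonneg_infsum_le_0D[where A = UNIV]) (use assms in \<open>auto simp: l2_def\<close>)
  then show "u k = 0" by simp
qed

(* The series defining the inner product converges absolutely, by |xy| <= |x|^2 + |y|^2. *)
lemma l2_inner_summable:
  assumes "u \<in> l2" "v \<in> l2"
  shows "(\<lambda>k. u k * cnj (v k)) summable_on UNIV"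
proof -
  have "(\<lambda>k. (norm (u k))\<^sup>2 + (norm (v k))\<^sup>2) summable_on UNIV"
    by (intro summable_on_add l2_summable assms)
  then have "(\<lambda>k. norm ((norm (u k))\<^sup>2 + (norm (v k))\<^sup>2)) summable_on UNIV"
    by (rule summable_on_iff_abs_summable_on_real[THEN iffD1])
  then have "(\<lambda>k. norm (u k * cnj (v k))) summable_on UNIV"
  proof (rule Infinite_Sum.abs_summable_on_comparison_test)
    fix k
    have "norm (u k) * norm (v k) \<le> (norm (u k))\<^sup>2 + (norm (v k))\<^sup>2"
      using sum_squares_bound[of "norm (u k)" "norm (v k)"]
        mult_nonneg_nonneg[OF norm_ge_zero norm_ge_zero, of "u k" "v k"] by linarith
    then show "norm (u k * cnj (v k)) \<le> norm ((norm (u k))\<^sup>2 + (norm (v k))\<^sup>2)"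
      by (simp add: norm_mult)
  qed
  then show ?thesis by (rule abs_summable_summable)
qed

lemma l2_inner_lincomb_left:
  assumes "a \<in> l2" "b \<in> l2" "v \<in> l2"
  shows "l2_inner (\<lambda>k. p * a k + q * b k) v = p * l2_inner a v + q * l2_inner b v"
proof -
  have "l2_inner (\<lambda>k. p * a k + q * b k) v
      = infsum (\<lambda>k. p * (a k * cnj (v k)) + q * (b k * cnj (v k))) UNIV"
    unfolding l2_inner_def by (simp add: algebra_simps)
  also have "\<dots> = infsum (\<lambda>k. p * (a k * cnj (v k))) UNIV + infsum (\<lambda>k. q * (b k * cnj (v k))) UNIV"
    by (intro infsum_add summable_on_cmult_right l2_inner_summable assms)
  also have "\<dots> = p * l2_inner a v + q * l2_inner b v"
    unfolding l2_inner_def infsum_cmult_right' ..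
  finally show ?thesis .
qed

lemma l2_inner_scale_left:
  "u \<in> l2 \<Longrightarrow> v \<in> l2 \<Longrightarrow> l2_inner (\<lambda>k. p * u k) v = p * l2_inner u v"
  using l2_inner_lincomb_left[of u u v p 0] by simp

lemma l2_inner_cnj: "l2_inner u v = cnj (l2_inner v u)"
  unfolding l2_inner_def by (simp flip: infsum_cnj add: mult.commute)

lemma l2_inner_lincomb_right:
  assumes "a \<in> l2" "b \<in> l2" "v \<in> l2"
  shows "l2_inner v (\<lambda>k. p * a k + q * b k) = cnj p * l2_inner v a + cnj q * l2_inner v b"
proof -
  have "l2_inner v (\<lambda>k. p * a k + q * b k) = cnj (p * l2_inner a v + q * l2_inner b v)"
    by (subst l2_inner_cnj) (simp add: l2_inner_lincomb_left assms)
  then show ?thesis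
    by (simp add: l2_inner_cnj[of a v] l2_inner_cnj[of b v])
qed

lemma l2_inner_zero_left: "l2_inner (\<lambda>_. 0) v = 0"
  by (simp add: l2_inner_def)

lemma l2_inner_self:
  assumes "u \<in> l2"
  shows "l2_inner u u = complex_of_real (infsum (\<lambda>k. (norm (u k))\<^sup>2) UNIV)"
proof -
  have "((\<lambda>k. complex_of_real ((norm (u k))\<^sup>2)) has_sum
          complex_of_real (infsum (\<lambda>k. (norm (u k))\<^sup>2) UNIV)) UNIV"
    using l2_summable[OF assms] by (intro has_sum_of_real) (simp add: summable_iff_has_sum_infsum)
  then show ?thesis
    unfolding l2_inner_def complex_norm_square by (rule infsumI)
qed

lemma l2_inner_sum_left:
  assumes "\<And>l. l \<in> L \<Longrightarrow> f l \<in> l2" "v \<in> l2"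
  shows "l2_inner (\<lambda>k. \<Sum>l\<in>L. f l k) v = (\<Sum>l\<in>L. l2_inner (f l) v)"
proof (cases "finite L")
  case True
  then show ?thesis using assms(1)
  proof (induction L rule: finite_induct)
    case (insert x F)
    have "l2_inner (\<lambda>k. 1 * f x k + 1 * (\<Sum>l\<in>F. f l k)) v
        = l2_inner (f x) v + l2_inner (\<lambda>k. \<Sum>l\<in>F. f l k) v"
      using insert assms(2) by (subst l2_inner_lincomb_left) (auto intro: l2_sum)
    then show ?case using insert by simp
  qed (simp add: l2_inner_zero_left)
qed (simp add: l2_inner_zero_left)

lemma l2_inner_delta: "l2_inner (delta m) v = cnj (v m)"
proof -
  have "l2_inner (delta m) v = infsum (\<lambda>j. delta m j * cnj (v j)) {m}"
    unfolding l2_inner_def by (rule infsum_cong_neutral) (auto simp: delta_def)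
  then show ?thesis by (simp add: delta_def)
qed

(* Continuity argument behind triangular_range_nhds below: for every q near 0 some circle of radius
   s sqrt(1 - s^2) C centred at s^2 E passes through q (intermediate value theorem in s). *)
lemma circle_crossing:
  fixes E :: complex and C :: real
  assumes C: "C > 0"
  shows "\<exists>r>0. \<forall>q. cmod q < r \<longrightarrow>
           (\<exists>s. 0 \<le> s \<and> s \<le> 1 \<and> cmod (q - of_real (s\<^sup>2) * E) = s * sqrt (1 - s\<^sup>2) * C)"
proof -
  define s0 where "s0 = min (1/2) (C / (4 * (cmod E + 1)))"
  have denom_pos: "cmod E + 1 > 0" by (simp add: add_nonneg_pos)
  then have s0_pos: "s0 > 0" using C by (simp add: s0_def)
  have s0_half: "s0 \<le> 1/2" unfolding s0_def by (rule min.cobounded1)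
  have s0E: "s0 * cmod E \<le> C / 4"
  proof -
    have "s0 * cmod E \<le> C / (4 * (cmod E + 1)) * (cmod E + 1)"
      using s0_pos unfolding s0_def by (intro mult_mono) auto
    also have "\<dots> = C / 4" using denom_pos by (simp add: field_simps)
    finally show ?thesis .
  qed
  have "\<exists>s. 0 \<le> s \<and> s \<le> 1 \<and> cmod (q - of_real (s\<^sup>2) * E) = s * sqrt (1 - s\<^sup>2) * C"
    if q: "cmod q < s0 * C / 4" for q
  proof -
    define h where "h = (\<lambda>s::real. s * sqrt (1 - s\<^sup>2) * C - cmod (q - of_real (s\<^sup>2) * E))"
    have "continuous_on {0..s0} h" unfolding h_def by (intro continuous_intros)
    moreover have "h 0 \<le> 0" by (simp add: h_def)
    moreover have "0 \<le> h s0"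
    proof -
      have "(1/2)\<^sup>2 \<le> 1 - s0\<^sup>2"
        using power_mono[of s0 "1/2" 2] s0_pos s0_half by (simp add: power2_eq_square)
      then have "1/2 \<le> sqrt (1 - s0\<^sup>2)" by (rule real_le_rsqrt)
      then have "s0 * C / 2 \<le> s0 * sqrt (1 - s0\<^sup>2) * C"
        using mult_right_mono[of "1/2" "sqrt (1 - s0\<^sup>2)" "s0 * C"] s0_pos C
        by (simp add: algebra_simps)
      moreover have "cmod (q - of_real (s0\<^sup>2) * E) \<le> cmod q + s0 * (s0 * cmod E)"
        using norm_triangle_ineq4[of q "of_real (s0\<^sup>2) * E"]
        by (simp add: norm_mult power2_eq_square)
      moreover have "s0 * (s0 * cmod E) \<le> s0 * (C / 4)"
        using s0E s0_pos by (simp add: mult_left_mono)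
      ultimately show ?thesis using q unfolding h_def by simp
    qed
    ultimately obtain s where "0 \<le> s" "s \<le> s0" "h s = 0"
      using IVT'[of h 0 0 s0] s0_pos by auto
    then show ?thesis using s0_half unfolding h_def by (intro exI[of _ s]) auto
  qed
  moreover have "s0 * C / 4 > 0" using s0_pos C by simp
  ultimately show ?thesis by blast
qed

lemma unimodular_ratio:
  fixes D R :: complex
  assumes "cmod D = cmod R"
  shows "\<exists>\<omega>. \<omega> * cnj \<omega> = 1 \<and> D * \<omega> = R"
proof (cases "D = 0")
  case True
  then show ?thesis using assms by (intro exI[of _ 1]) simp
next
  case False
  then have "R \<noteq> 0" using assms by auto
  then have "cmod (R / D) = 1" using assms by (simp add: norm_divide)
  then have "R / D * cnj (R / D) = 1"
    by (metis complex_norm_square of_real_1 power_one)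
  then show ?thesis using False by (intro exI[of _ "R / D"]) simp
qed

(* Numerical range of an upper triangular 2x2 matrix [[z, c], [0, e]] on a space where the
   second basis vector has squared norm N: the vector (a, b) with |a|^2 = 1 - s^2 and
   |b|^2 N = s^2 yields the value z + s^2 (e/N - z) + s sqrt(1 - s^2) (c / sqrt N) w for a
   suitable unimodular w; so every point on the circle of radius s sqrt(1 - s^2) |c| / sqrt N
   around z + s^2 (e/N - z) is attained. *)
lemma triangular_range_circle:
  fixes z c e p :: complex and N s :: real
  assumes N: "N > 0" and s: "0 \<le> s" "s \<le> 1"
    and crossing: "cmod (p - z - of_real (s\<^sup>2) * (e / of_real N - z))
                     = s * sqrt (1 - s\<^sup>2) * (cmod c / sqrt N)"
  shows "\<exists>\<alpha> \<beta>. \<alpha> * cnj \<alpha> + \<beta> * cnj \<beta> * of_real N = 1 \<and>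
               p = \<alpha> * cnj \<alpha> * z + \<beta> * cnj \<alpha> * c + \<beta> * cnj \<beta> * e"
proof -
  define a where "a = sqrt (1 - s\<^sup>2)"
  have "s\<^sup>2 \<le> 1" using s by (simp add: power_le_one)
  then have a: "a \<ge> 0" "a * a = 1 - s\<^sup>2" by (auto simp: a_def)
  have "cmod (of_real (s * a / sqrt N) * c) = s * a * (cmod c / sqrt N)"
    using s a N unfolding norm_mult norm_of_real by simp
  then obtain \<omega> where \<omega>: "\<omega> * cnj \<omega> = 1" and rotate:
    "of_real (s * a / sqrt N) * c * \<omega> = p - z - of_real (s\<^sup>2) * (e / of_real N - z)"
    using unimodular_ratio crossing unfolding a_def by metis
  define \<alpha> where "\<alpha> = complex_of_real a"
  define t where "t = s / sqrt N"
  define \<beta> where "\<beta> = of_real t * \<omega>"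
  have \<alpha>\<alpha>: "\<alpha> * cnj \<alpha> = of_real (1 - s\<^sup>2)"
    unfolding \<alpha>_def using a by (simp flip: of_real_mult)
  have \<beta>\<beta>: "\<beta> * cnj \<beta> = of_real (s\<^sup>2 / N)"
  proof -
    have "\<beta> * cnj \<beta> = of_real (t * t) * (\<omega> * cnj \<omega>)"
      unfolding \<beta>_def by (simp add: mult_ac)
    also have "t * t = s\<^sup>2 / N"
      using N by (simp add: t_def power2_eq_square)
    finally show ?thesis using \<omega> by simp
  qed
  have \<beta>\<alpha>: "\<beta> * cnj \<alpha> * c = of_real (s * a / sqrt N) * c * \<omega>"
    unfolding \<beta>_def \<alpha>_def t_def by (simp add: algebra_simps)
  show ?thesis
  proof (intro exI conjI)
    show "\<alpha> * cnj \<alpha> + \<beta> * cnj \<beta> * of_real N = 1"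
      unfolding \<alpha>\<alpha> \<beta>\<beta> using N by (simp flip: of_real_mult of_real_add)
    show "p = \<alpha> * cnj \<alpha> * z + \<beta> * cnj \<alpha> * c + \<beta> * cnj \<beta> * e"
      unfolding \<alpha>\<alpha> \<beta>\<beta> \<beta>\<alpha> rotate using N by (simp add: field_simps)
  qed
qed

lemma triangular_range_nhds:
  fixes z c e :: complex and N :: real
  assumes N: "N > 0" and c: "c \<noteq> 0"
  shows "\<exists>r>0. \<forall>p. cmod (p - z) < r \<longrightarrow>
           (\<exists>\<alpha> \<beta>. \<alpha> * cnj \<alpha> + \<beta> * cnj \<beta> * of_real N = 1 \<and>
                  p = \<alpha> * cnj \<alpha> * z + \<beta> * cnj \<alpha> * c + \<beta> * cnj \<beta> * e)"
proof -
  have "cmod c / sqrt N > 0" using N c by simp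
  then obtain r where "r > 0" and r: "\<And>q. cmod q < r \<Longrightarrow> \<exists>s. 0 \<le> s \<and> s \<le> 1 \<and>
      cmod (q - of_real (s\<^sup>2) * (e / of_real N - z)) = s * sqrt (1 - s\<^sup>2) * (cmod c / sqrt N)"
    using circle_crossing by blast
  have "\<exists>\<alpha> \<beta>. \<alpha> * cnj \<alpha> + \<beta> * cnj \<beta> * of_real N = 1 \<and>
               p = \<alpha> * cnj \<alpha> * z + \<beta> * cnj \<alpha> * c + \<beta> * cnj \<beta> * e"
    if "cmod (p - z) < r" for p
    using r[OF that] triangular_range_circle[OF N] by blast
  then show ?thesis using \<open>r > 0\<close> by blast
qed

definition linear_op :: "(('k \<Rightarrow> complex) \<Rightarrow> ('k \<Rightarrow> complex)) \<Rightarrow> bool" where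
  "linear_op A \<longleftrightarrow> (\<forall>p q x y. A (\<lambda>k. p * x k + q * y k) = (\<lambda>k. p * A x k + q * A y k))"

lemma linear_opD: "linear_op A \<Longrightarrow> A (\<lambda>k. p * x k + q * y k) = (\<lambda>k. p * A x k + q * A y k)"
  unfolding linear_op_def by blast

lemma linear_op_scale: "linear_op A \<Longrightarrow> A (\<lambda>k. p * x k) = (\<lambda>k. p * A x k)"
  using linear_opD[of A p x 0 x] by simp

lemma linear_op_zero: "linear_op A \<Longrightarrow> A (\<lambda>_. 0) = (\<lambda>_. 0)"
  using linear_op_scale[of A 0] by simp

lemma l2_norm_eq_1: "u \<in> l2 \<Longrightarrow> l2_inner u u = 1 \<Longrightarrow> l2_norm u = 1"
  by (simp add: l2_inner_self l2_norm_def)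

lemma unit_eigenvector:
  assumes A: "linear_op A" and "is_eigenvalue A z"
  obtains u where "u \<in> l2" "A u = (\<lambda>k. z * u k)" "l2_inner u u = 1"
proof -
  obtain v where v: "v \<in> l2" "v \<noteq> (\<lambda>_. 0)" and Av: "A v = (\<lambda>k. z * v k)"
    using assms(2) unfolding is_eigenvalue_def by blast
  define M where "M = infsum (\<lambda>k. (norm (v k))\<^sup>2) UNIV"
  have "M \<ge> 0" unfolding M_def by (rule infsum_nonneg) simp
  moreover have "M \<noteq> 0" using l2_eq_zero[OF v(1)] v(2) by (auto simp: M_def)
  ultimately have M: "M > 0" by simp
  define c where "c = complex_of_real (1 / sqrt M)"
  define u where "u = (\<lambda>k. c * v k)"
  have u: "u \<in> l2" unfolding u_def by (rule l2_scale[OF v(1)])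
  have "l2_inner u u = c * cnj c * of_real M"
    using l2_inner_scale_left[OF v(1) u] l2_inner_lincomb_right[OF v(1) v(1) v(1), of c 0]
      l2_inner_self[OF v(1)] by (simp add: M_def u_def)
  also have "\<dots> = 1"
    using M by (simp add: c_def flip: of_real_mult)
  finally have "l2_inner u u = 1" .
  moreover have "A u = (\<lambda>k. z * u k)"
    unfolding u_def linear_op_scale[OF A] Av by (simp add: mult.left_commute)
  ultimately show ?thesis using that u by blast
qed

lemma compression_to_eigenvector_span:
  fixes \<alpha> \<beta> :: complex
  assumes A: "linear_op A"
    and u: "u \<in> l2" and Au: "A u = (\<lambda>k. z * u k)" and uu: "l2_inner u u = 1"
    and w: "w \<in> l2" and Aw: "A w \<in> l2" and wu: "l2_inner w u = 0"
  defines "x \<equiv> \<lambda>k. \<alpha> * u k + \<beta> * w k"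
  shows "l2_inner x x = \<alpha> * cnj \<alpha> + \<beta> * cnj \<beta> * l2_inner w w"
    and "l2_inner (A x) x = \<alpha> * cnj \<alpha> * z + \<beta> * cnj \<alpha> * l2_inner (A w) u
                            + \<beta> * cnj \<beta> * l2_inner (A w) w"
proof -
  have x: "x \<in> l2" unfolding x_def by (rule l2_lincomb[OF u w])
  have uw: "l2_inner u w = 0" using wu l2_inner_cnj[of u w] by simp
  have ux: "l2_inner u x = cnj \<alpha>"
    unfolding x_def l2_inner_lincomb_right[OF u w u] uu uw by simp
  have wx: "l2_inner w x = cnj \<beta> * l2_inner w w"
    unfolding x_def l2_inner_lincomb_right[OF u w w] wu by simp
  have Awx: "l2_inner (A w) x = cnj \<alpha> * l2_inner (A w) u + cnj \<beta> * l2_inner (A w) w"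
    unfolding x_def l2_inner_lincomb_right[OF u w Aw] ..
  have "l2_inner x x = \<alpha> * l2_inner u x + \<beta> * l2_inner w x"
    unfolding x_def by (rule l2_inner_lincomb_left[OF u w x[unfolded x_def]])
  then show "l2_inner x x = \<alpha> * cnj \<alpha> + \<beta> * cnj \<beta> * l2_inner w w"
    by (simp add: ux wx algebra_simps)
  have "A x = (\<lambda>k. (\<alpha> * z) * u k + \<beta> * A w k)"
    unfolding x_def linear_opD[OF A] Au by (simp add: mult.assoc)
  then have "l2_inner (A x) x = (\<alpha> * z) * l2_inner u x + \<beta> * l2_inner (A w) x"
    using l2_inner_lincomb_left[OF u Aw x] by simp
  then show "l2_inner (A x) x = \<alpha> * cnj \<alpha> * z + \<beta> * cnj \<alpha> * l2_inner (A w) u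
                                + \<beta> * cnj \<beta> * l2_inner (A w) w"
    by (simp add: ux Awx algebra_simps)
qed

(* Otherwise the compression of A
   to span{u, w} is triangular with nonzero corner entry, and the lemma on triangular matrices
   puts a disc around z inside the numerical range. *)
lemma boundary_eigenvector_orthogonal:
  assumes A: "linear_op A"
    and u: "u \<in> l2" and Au: "A u = (\<lambda>k. z * u k)" and uu: "l2_inner u u = 1"
    and w: "w \<in> l2" and Aw: "A w \<in> l2" and wu: "l2_inner w u = 0"
    and boundary: "z \<in> frontier (numerical_range A)"
  shows "l2_inner (A w) u = 0"
proof (rule ccontr)
  define N where "N = infsum (\<lambda>k. (norm (w k))\<^sup>2) UNIV"
  assume c0: "l2_inner (A w) u \<noteq> 0"
  have "w \<noteq> (\<lambda>_. 0)"
    using c0 linear_op_zero[OF A] by (auto simp: l2_inner_zero_left)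
  then have "N \<noteq> 0" using l2_eq_zero[OF w] by (auto simp: N_def)
  moreover have "N \<ge> 0" unfolding N_def by (rule infsum_nonneg) simp
  ultimately have N: "N > 0" by simp
  have ww: "l2_inner w w = of_real N" using l2_inner_self[OF w] by (simp add: N_def)
  obtain r where "r > 0" and r: "\<And>p. cmod (p - z) < r \<Longrightarrow>
      \<exists>\<alpha> \<beta>. \<alpha> * cnj \<alpha> + \<beta> * cnj \<beta> * of_real N = 1 \<and>
             p = \<alpha> * cnj \<alpha> * z + \<beta> * cnj \<alpha> * l2_inner (A w) u + \<beta> * cnj \<beta> * l2_inner (A w) w"
    using triangular_range_nhds[OF N c0] by blast
  have "ball z r \<subseteq> numerical_range A"
  proof
    fix p assume "p \<in> ball z r"
    then have "cmod (p - z) < r" by (simp add: dist_norm norm_minus_commute)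
    then obtain \<alpha> \<beta> where normalised: "\<alpha> * cnj \<alpha> + \<beta> * cnj \<beta> * of_real N = 1"
      and p: "p = \<alpha> * cnj \<alpha> * z + \<beta> * cnj \<alpha> * l2_inner (A w) u + \<beta> * cnj \<beta> * l2_inner (A w) w"
      using r by blast
    define x where "x = (\<lambda>k. \<alpha> * u k + \<beta> * w k)"
    have x: "x \<in> l2" unfolding x_def by (rule l2_lincomb[OF u w])
    note compression = compression_to_eigenvector_span[OF A u Au uu w Aw wu, of \<alpha> \<beta>, folded x_def]
    have "l2_norm x = 1" using l2_norm_eq_1[OF x] compression(1) normalised ww by simp
    moreover have "l2_inner (A x) x = p" using compression(2) p by simp
    ultimately show "p \<in> numerical_range A"
      unfolding numerical_range_def using x by blast
  qed
  then have "z \<in> interior (numerical_range A)"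
    using \<open>r > 0\<close> by (intro interiorI[OF open_ball]) auto
  then show False using boundary by (simp add: frontier_def)
qed

definition unit_steps :: "(int ^ 'n) set" where
  "unit_steps = {l. (\<Sum>i\<in>UNIV. \<bar>l $ i\<bar>) = 1}"

lemma lap_unit_steps: "lap u k = (\<Sum>l\<in>unit_steps. u (k + l))"
  unfolding lap_def unit_steps_def ..

(* The neighbour set is symmetric under l |-> -l, which makes the Laplacian symmetric. *)
lemma lap_reflect: "lap u k = (\<Sum>l\<in>unit_steps. u (k - l))"
  unfolding lap_unit_steps
  by (rule sum.reindex_bij_witness[where i = uminus and j = uminus]) (auto simp: unit_steps_def)

lemma lap_lincomb: "lap (\<lambda>k. p * u k + q * v k) = (\<lambda>k. p * lap u k + q * lap v k)"
  unfolding lap_unit_steps by (auto simp: sum.distrib sum_distrib_left)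

lemma linear_op_jacobi: "linear_op (jacobi d)"
  unfolding linear_op_def jacobi_def lap_lincomb by (auto simp: algebra_simps)

(* J applied to a basis vector is finitely supported, hence in l2 without any bound on d. *)
lemma jacobi_delta:
  "jacobi d (delta m) = (\<lambda>j. (\<Sum>l\<in>unit_steps. delta (m - l) j) + d m * delta m j)"
  unfolding jacobi_def lap_unit_steps delta_def
  by (intro ext arg_cong2[where f = "(+)"] sum.cong) (auto simp: eq_diff_eq)

lemma l2_jacobi_delta: "jacobi d (delta m) \<in> l2"
  unfolding jacobi_delta by (intro l2_add l2_sum l2_scale l2_delta)

(* Symmetry of J0: pairing J delta_m with u yields the m-th coordinate of the formal adjoint
   J0 + conj(D) applied to u. *)
lemma l2_inner_jacobi_delta:
  fixes d :: "int ^ 'n \<Rightarrow> complex"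
  assumes "u \<in> l2"
  shows "l2_inner (jacobi d (delta m)) u = cnj (jacobi (\<lambda>k. cnj (d k)) u m)"
proof -
  have "l2_inner (jacobi d (delta m)) u
      = 1 * l2_inner (\<lambda>j. \<Sum>l\<in>unit_steps. delta (m - l) j) u + d m * l2_inner (delta m) u"
    unfolding jacobi_delta using l2_inner_lincomb_left[OF l2_sum[OF l2_delta] l2_delta assms, of 1]
    by simp
  also have "\<dots> = cnj (jacobi (\<lambda>k. cnj (d k)) u m)"
    unfolding l2_inner_sum_left[OF l2_delta assms] l2_inner_delta jacobi_def lap_reflect[of u m]
    by simp
  finally show ?thesis .
qed

(* Apply the key step to
   w = delta_m - conj(u m) u. *)
lemma boundary_eigenvalue_adjoint:
  fixes d :: "int ^ 'n \<Rightarrow> complex"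
  assumes "boundary_eigenvalue (jacobi d) z"
  obtains u where "u \<in> l2" "u \<noteq> (\<lambda>_. 0)" "jacobi d u = (\<lambda>k. z * u k)"
    "jacobi (\<lambda>k. cnj (d k)) u = (\<lambda>k. cnj z * u k)"
proof -
  have boundary: "z \<in> frontier (numerical_range (jacobi d))"
    using assms by (simp add: boundary_eigenvalue_def)
  obtain u where u: "u \<in> l2" and Ju: "jacobi d u = (\<lambda>k. z * u k)" and uu: "l2_inner u u = 1"
    using unit_eigenvector[OF linear_op_jacobi] assms by (auto simp: boundary_eigenvalue_def)
  have "jacobi (\<lambda>k. cnj (d k)) u m = cnj z * u m" for m
  proof -
    define w where "w = (\<lambda>j. 1 * delta m j + (- cnj (u m)) * u j)"
    have w: "w \<in> l2" unfolding w_def by (rule l2_lincomb[OF l2_delta u])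
    have wu: "l2_inner w u = 0"
      unfolding w_def l2_inner_lincomb_left[OF l2_delta u u] l2_inner_delta uu by simp
    have Jw: "jacobi d w = (\<lambda>j. 1 * jacobi d (delta m) j + (- cnj (u m)) * (z * u j))"
      unfolding w_def linear_opD[OF linear_op_jacobi] Ju ..
    have Jw_l2: "jacobi d w \<in> l2"
      unfolding Jw by (intro l2_lincomb l2_jacobi_delta l2_scale u)
    have "0 = l2_inner (jacobi d w) u"
      using boundary_eigenvector_orthogonal[OF linear_op_jacobi u Ju uu w Jw_l2 wu boundary] ..
    also have "\<dots> = cnj (jacobi (\<lambda>k. cnj (d k)) u m) - cnj (u m) * z"
      unfolding Jw l2_inner_lincomb_left[OF l2_jacobi_delta l2_scale[OF u] u]
        l2_inner_scale_left[OF u u] uu l2_inner_jacobi_delta[OF u] by simp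
    finally show ?thesis
      by (metis complex_cnj_cnj complex_cnj_mult eq_iff_diff_eq_0 mult.commute)
  qed
  moreover have "u \<noteq> (\<lambda>_. 0)" using uu l2_inner_zero_left[of u] by auto
  ultimately show ?thesis using that u Ju by blast
qed

(* Part (i): averaging the two eigenvalue equations. *)
lemma boundary_eigenvalue_real_part:
  fixes d :: "int ^ 'n \<Rightarrow> complex"
  assumes "boundary_eigenvalue (jacobi d) z"
  shows "is_eigenvalue (jacobi (\<lambda>k. complex_of_real (Re (d k)))) (complex_of_real (Re z))"
proof -
  obtain u where u: "u \<in> l2" "u \<noteq> (\<lambda>_. 0)" and Ju: "jacobi d u = (\<lambda>k. z * u k)"
    and J'u: "jacobi (\<lambda>k. cnj (d k)) u = (\<lambda>k. cnj z * u k)"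
    using boundary_eigenvalue_adjoint[OF assms] .
  have twice_Re: "2 * complex_of_real (Re w) = w + cnj w" for w
    by (simp add: complex_add_cnj)
  have "jacobi (\<lambda>k. complex_of_real (Re (d k))) u k = complex_of_real (Re z) * u k" for k
  proof -
    have "2 * jacobi (\<lambda>k. complex_of_real (Re (d k))) u k
        = jacobi d u k + jacobi (\<lambda>k. cnj (d k)) u k"
      by (simp add: jacobi_def twice_Re algebra_simps)
    also have "\<dots> = 2 * (complex_of_real (Re z) * u k)"
      by (simp add: Ju J'u twice_Re algebra_simps)
    finally show ?thesis by simp
  qed
  then show ?thesis unfolding is_eigenvalue_def using u by blast
qed

(* Part (ii): subtracting the two eigenvalue equations at a site where u does not vanish. *)
lemma boundary_eigenvalue_imag_part:
  fixes d :: "int ^ 'n \<Rightarrow> complex"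
  assumes "boundary_eigenvalue (jacobi d) z"
  shows "\<exists>k. Im (d k) = Im z"
proof -
  obtain u where u: "u \<noteq> (\<lambda>_. 0)" and Ju: "jacobi d u = (\<lambda>k. z * u k)"
    and J'u: "jacobi (\<lambda>k. cnj (d k)) u = (\<lambda>k. cnj z * u k)"
    using boundary_eigenvalue_adjoint[OF assms] .
  obtain k where uk: "u k \<noteq> 0" using u by auto
  have "(d k - cnj (d k)) * u k = jacobi d u k - jacobi (\<lambda>k. cnj (d k)) u k"
    by (simp add: jacobi_def algebra_simps)
  also have "\<dots> = (z - cnj z) * u k"
    by (simp add: Ju J'u algebra_simps)
  finally have "d k - cnj (d k) = z - cnj z" using uk by simp
  then show ?thesis by (auto simp: complex_diff_cnj)
qed

theorem mainTheorem3:
  fixes d :: "int ^ 'n \<Rightarrow> complex"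
  assumes "bounded (range d)"
  shows "(\<forall>a::real. \<not> is_eigenvalue (jacobi (\<lambda>k. complex_of_real (Re (d k)))) (complex_of_real a)
            \<longrightarrow> \<not> (\<exists>z. boundary_eigenvalue (jacobi d) z \<and> Re z = a))
       \<and> (\<forall>b::real. (\<forall>k. Im (d k) \<noteq> b)
            \<longrightarrow> \<not> (\<exists>z. boundary_eigenvalue (jacobi d) z \<and> Im z = b))"
  using boundary_eigenvalue_real_part[of d] boundary_eigenvalue_imag_part[of d] by blast

end
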